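(* Let $d\ge2$, let $\mathbf A,\mathbf B\in\overline{\mathbb Q}[t]$ be nonzero coprime polynomials, $\mathbf c=\mathbf A/\mathbf B$, let $\lambda\in\overline{\mathbb Q}^*$ and let $|\cdot|_v$ be an absolute value on $\overline{\mathbb Q}$. Let $m\le1\le M$ be positive real numbers with $m\le|\lambda|_v\le M$. Then for all integers $1\le n_0\le n$, $$\left|\frac{\log M_{n,v}(\lambda)}{d^n}-\frac{\log M_{n_0,v}(\lambda)}{d^{n_0}}\right|\le\frac{\log(2M)-\log m}{d^{n_0}(d-1)}.$$
   Context: The polynomials $\mathbf A_{\mathbf c,n},\mathbf B_{\mathbf c,n}$ are defined by: $\mathbf A_{\mathbf c,0}=\mathbf A$, $\mathbf B_{\mathbf c,0}=\mathbf B$; if $\mathbf A(0)\neq0$ then $\mathbf A_{\mathbf c,1}=\mathbf A^d+t\mathbf B^d$, $\mathbf B_{\mathbf c,1}=\mathbf A\mathbf B^{d-1}$, while if $\mathbf A(0)=0$ then $\mathbf A_{\mathbf c,1}=(\mathbf A^d+t\mathbf B^d)/t$, $\mathbf B_{\mathbf c,1}=\mathbf A\mathbf B^{d-1}/t$; for $n\ge1$, $\mathbf A_{\mathbf c,n+1}=\mathbf A_{\mathbf c,n}^d+t\mathbf B_{\mathbf c,n}^d$, $\mathbf B_{\mathbf c,n+1}=\mathbf A_{\mathbf c,n}\mathbf B_{\mathbf c,n}^{d-1}$. Then $M_{n,v}(\lambda)=\max\{|\mathbf A_{\mathbf c,n}(\lambda)|_v,|\mathbf B_{\mathbf c,n}(\lambda)|_v\}$.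 *)

theory Defs
  imports "HOL-Computational_Algebra.Computational_Algebra"
begin

text \<open>The algebraic closure of Q is modelled as the set of algebraic complex numbers;
  polynomials over it are complex polynomials all of whose coefficients are algebraic.\<close>

definition alg_poly :: "complex poly \<Rightarrow> bool" where
  "alg_poly p \<longleftrightarrow> (\<forall>i. algebraic (coeff p i))"

definition abs_value_alg :: "(complex \<Rightarrow> real) \<Rightarrow> bool" where
  "abs_value_alg v \<longleftrightarrow>
     (\<forall>x. algebraic x \<longrightarrow> v x \<ge> 0) \<and>
     (\<forall>x. algebraic x \<longrightarrow> (v x = 0 \<longleftrightarrow> x = 0)) \<and>
     (\<forall>x y. algebraic x \<longrightarrow> algebraic y \<longrightarrow> v (x * y) = v x * v y) \<and>
     (\<forall>x y. algebraic x \<longrightarrow> algebraic y \<longrightarrow> v (x + y) \<le> v x + v y)"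

fun ABseq :: "nat \<Rightarrow> complex poly \<Rightarrow> complex poly \<Rightarrow> nat \<Rightarrow> complex poly \<times> complex poly" where
  "ABseq d A B 0 = (A, B)"
| "ABseq d A B (Suc 0) =
     (if poly A 0 \<noteq> 0 then (A ^ d + [:0, 1:] * B ^ d, A * B ^ (d - 1))
      else ((A ^ d + [:0, 1:] * B ^ d) div [:0, 1:], (A * B ^ (d - 1)) div [:0, 1:]))"
| "ABseq d A B (Suc (Suc n)) =
     (let (a, b) = ABseq d A B (Suc n) in (a ^ d + [:0, 1:] * b ^ d, a * b ^ (d - 1)))"

definition Mnv :: "(complex \<Rightarrow> real) \<Rightarrow> nat \<Rightarrow> complex poly \<Rightarrow> complex poly \<Rightarrow> nat \<Rightarrow> complex \<Rightarrow> real" where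
  "Mnv v d A B n lam = max (v (poly (fst (ABseq d A B n)) lam)) (v (poly (snd (ABseq d A B n)) lam))"

end

theory Submission
  imports Defs "HOL-Algebra.Algebraic_Closure_Type"
begin

text \<open>Let a_n, b_n be the values at \<open>\<lambda>\<close> of A_{c,n}, B_{c,n}. For n \<open>\<ge>\<close> 1 they satisfy
  a_{n+1} = a_n^d + \<open>\<lambda>\<close> b_n^d and b_{n+1} = a_n b_n^{d-1}, and by coprimality of A and B they never
  vanish simultaneously. The triangle inequality and a case distinction on which of |a_n|_v,
  |b_n|_v dominates give m/(2M) M_n^d \<open>\<le>\<close> M_{n+1} \<open>\<le>\<close> 2M M_n^d, i.e.
  |log M_{n+1} - d log M_n| \<open>\<le>\<close> log(2M) - log m. Dividing by d^{n+1} and summing the resulting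
  geometric series yields the estimate.\<close>

section \<open>Algebraic numbers form a field\<close>

text \<open>The library has no closure of \<open>algebraic\<close> under \<open>+\<close> and \<open>*\<close>; we obtain it from
  HOL-Algebra's theorem that the elements algebraic over a subfield form a subfield, applied
  to \<open>\<rat>\<close> inside the field \<open>'a\<close> viewed as a ring.\<close>

abbreviation type_field :: "'a::field_char_0 ring" where
  "type_field \<equiv> ring_of_type_algebra"

lemma type_field_simps [simp]:
  "carrier type_field = UNIV" "monoid.mult type_field x y = x * y"
  "add type_field x y = x + y" "one type_field = 1" "zero type_field = 0"
  by (auto simp: ring_of_type_algebra_def)

interpretation type_field: ring "type_field :: 'a::field_char_0 ring" ..

lemma type_field_a_inv [simp]: "a_inv type_field x = - (x::'a::field_char_0)"
  by (rule type_field.add.inv_equality) auto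

lemma type_field_m_inv [simp]: "(x::'a::field_char_0) \<noteq> 0 \<Longrightarrow> m_inv type_field x = inverse x"
  by (rule type_field.inv_char) auto

lemma type_field_pow [simp]: "x [^]\<^bsub>type_field\<^esub> (n::nat) = (x::'a::field_char_0) ^ n"
  by (induction n) auto

lemma type_field_eval: "type_field.eval p x = poly (Poly (rev p)) (x::'a::field_char_0)"
proof (induction p)
  case (Cons a p)
  have "poly (Poly (rev p @ [a])) x = poly (Poly (rev p)) x + a * x ^ length p"
    by (simp add: Poly_append poly_monom)
  with Cons show ?case by simp
qed simp

lemma type_field_domain: "domain (type_field :: 'a::field_char_0 ring)"
  by (simp add: field.axioms(1) field_from_type_algebra)

lemma Rats_subfield_type_field: "subfield (\<rat> :: 'a::field_char_0 set) type_field"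
  by (rule field.subfieldI'[OF _ type_field.subringI]) auto

lemma algebraic_iff_algebraic_over_Rats:
  "algebraic x \<longleftrightarrow> (type_field.algebraic over \<rat>) (x::'a::field_char_0)"
proof
  assume "algebraic x"
  then obtain p where p: "\<forall>i. Polynomial.coeff p i \<in> \<rat>" "p \<noteq> 0" "poly p x = 0"
    by (auto simp: algebraic_altdef)
  show "(type_field.algebraic over \<rat>) x"
  proof (rule type_field.algebraicI[of "rev (coeffs p)"])
    show "rev (coeffs p) \<in> carrier (\<rat>[X]\<^bsub>type_field\<^esub>)"
      using p by (auto simp: univ_poly_def polynomial_def coeffs_def hd_rev last_map)
    show "rev (coeffs p) \<noteq> []" using p by simp
    show "type_field.eval (rev (coeffs p)) x = \<zero>\<^bsub>type_field\<^esub>"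
      using p by (simp add: type_field_eval)
  qed
next
  assume "(type_field.algebraic over \<rat>) x"
  then obtain p where p: "p \<in> carrier (\<rat>[X]\<^bsub>type_field\<^esub>)" "p \<noteq> []" "type_field.eval p x = 0"
    using domain.algebraicE[OF type_field_domain subfieldE(1)[OF Rats_subfield_type_field] _ \<open>(type_field.algebraic over \<rat>) x\<close>]
    by auto
  have "set p \<subseteq> \<rat>" "hd p \<noteq> 0"
    using p(1,2) by (auto simp: univ_poly_def polynomial_def)
  then have "\<forall>i. Polynomial.coeff (Poly (rev p)) i \<in> \<rat>"
    by (auto simp: nth_default_def) (metis length_rev nth_mem set_rev subsetD)
  moreover have "Poly (rev p) \<noteq> 0"
  proof
    assume "Poly (rev p) = 0"
    then obtain n where "rev p = replicate n 0" by (auto simp: Poly_eq_0)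
    then have "last (rev p) = 0" using p(2) by (cases n) auto
    with \<open>hd p \<noteq> 0\<close> p(2) show False by (simp add: last_rev)
  qed
  ultimately show "algebraic x"
    using p(3) unfolding algebraic_altdef type_field_eval by blast
qed

lemma
  fixes x y :: "'a::field_char_0"
  assumes "algebraic x" and "algebraic y"
  shows algebraic_add: "algebraic (x + y)" and algebraic_mult: "algebraic (x * y)"
proof -
  let ?S = "{z \<in> carrier type_field. (type_field.algebraic over \<rat>) z}"
  have S: "subring ?S (type_field :: 'a ring)"
    by (rule subfieldE(1)[OF field.subfield_of_algebraics[OF _ Rats_subfield_type_field]]) auto
  have "x \<in> ?S" "y \<in> ?S"
    using assms by (simp_all add: algebraic_iff_algebraic_over_Rats)
  with subringE(6,7)[OF S] show "algebraic (x + y)" "algebraic (x * y)"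
    by (auto simp: algebraic_iff_algebraic_over_Rats)
qed

lemma algebraic_power: "algebraic (x::'a::field_char_0) \<Longrightarrow> algebraic (x ^ n)"
  by (induction n) (auto simp: algebraic_mult)

lemma algebraic_poly: "alg_poly p \<Longrightarrow> algebraic x \<Longrightarrow> algebraic (poly p x)"
proof (induction p rule: pCons_induct)
  case (pCons a p)
  then have "algebraic a" "alg_poly p"
    unfolding alg_poly_def by (metis coeff_pCons_0, metis coeff_pCons_Suc)
  with pCons show ?case by (simp add: algebraic_add algebraic_mult)
qed simp

lemma max_step_upper_bound:
  fixes x y l p M :: real
  assumes "d \<ge> 1" "x \<ge> 0" "y \<ge> 0" "1 \<le> M" "0 \<le> l" "l \<le> M" "p \<le> x ^ d + l * y ^ d"
  shows "max p (x * y ^ (d - 1)) \<le> 2 * M * max x y ^ d"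
proof -
  define Z where "Z = max x y"
  have "x ^ d \<le> Z ^ d" "y ^ d \<le> Z ^ d" "Z ^ d \<ge> 0"
    using assms by (auto simp: Z_def intro: power_mono)
  moreover have "l * y ^ d \<le> M * Z ^ d" "Z ^ d \<le> M * Z ^ d"
    using assms calculation by (auto intro: mult_mono mult_right_mono[of 1 M, simplified])
  ultimately have "p \<le> 2 * M * Z ^ d"
    using assms by linarith
  moreover have "x * y ^ (d - 1) \<le> Z * Z ^ (d - 1)"
    using assms by (auto simp: Z_def intro!: mult_mono power_mono)
  moreover have "Z * Z ^ (d - 1) = Z ^ d"
    using \<open>d \<ge> 1\<close> by (simp flip: power_Suc)
  moreover have "Z ^ d \<le> 2 * M * Z ^ d"
    using \<open>Z ^ d \<le> M * Z ^ d\<close> \<open>Z ^ d \<ge> 0\<close> by linarith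
  ultimately show ?thesis
    unfolding Z_def[symmetric] by simp
qed

lemma max_step_lower_bound:
  fixes x y l p m M :: real
  assumes "d \<ge> 1" "x \<ge> 0" "y \<ge> 0" "0 < m" "m \<le> 1" "1 \<le> M" "m \<le> l" "l \<le> M"
    and "\<bar>x ^ d - l * y ^ d\<bar> \<le> p"
  shows "m / (2 * M) * max x y ^ d \<le> max p (x * y ^ (d - 1))"
proof (cases "y \<le> x")
  case True
  show ?thesis
  proof (cases "2 * M * y ^ d \<le> x ^ d")
    case True
    then have "x ^ d / 2 \<le> p"
      using assms mult_right_mono[of l M "y ^ d"] by auto
    moreover have "m / (2 * M) * x ^ d \<le> x ^ d / 2"
      using assms mult_left_le_one_le[of "x ^ d / 2" "m / M"] by simp
    ultimately show ?thesis
      unfolding max_absorb1[OF \<open>y \<le> x\<close>] by (meson max.coboundedI1 order_trans)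
  next
    case False
    have "y ^ d = y * y ^ (d - 1)"
      using \<open>d \<ge> 1\<close> by (simp flip: power_Suc)
    also have "\<dots> \<le> x * y ^ (d - 1)"
      using \<open>y \<le> x\<close> \<open>y \<ge> 0\<close> by (simp add: mult_right_mono)
    finally have "2 * M * y ^ d \<le> 2 * M * (x * y ^ (d - 1))"
      using assms by simp
    then have "x ^ d \<le> 2 * M * (x * y ^ (d - 1))"
      using False by linarith
    then have "x ^ d / (2 * M) \<le> x * y ^ (d - 1)"
      using assms by (simp add: field_simps)
    moreover have "m / (2 * M) * x ^ d \<le> x ^ d / (2 * M)"
      using assms mult_left_le_one_le[of "x ^ d / (2 * M)" m] by simp
    ultimately show ?thesis
      unfolding max_absorb1[OF \<open>y \<le> x\<close>] by (meson max.coboundedI2 order_trans)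
  qed
next
  case False
  have "m / (2 * M) * y ^ d = m * y ^ d / 2 * (1 / M)"
    by simp
  also have "\<dots> \<le> m * y ^ d / 2"
    using assms by (intro mult_right_le_one_le) auto
  finally have small: "m / (2 * M) * y ^ d \<le> m * y ^ d / 2" .
  show ?thesis
  proof (cases "2 * x ^ d \<le> m * y ^ d")
    case True
    then have "m * y ^ d / 2 \<le> p"
      using assms mult_right_mono[of m l "y ^ d"] by auto
    moreover note small
    ultimately show ?thesis
      unfolding max_absorb2[OF less_imp_le[OF \<open>\<not> y \<le> x\<close>[unfolded not_le]]]
      by (meson max.coboundedI1 order_trans)
  next
    case False
    have "x ^ d = x * x ^ (d - 1)"
      using \<open>d \<ge> 1\<close> by (simp flip: power_Suc)
    also have "\<dots> \<le> x * y ^ (d - 1)"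
      using \<open>\<not> y \<le> x\<close> \<open>x \<ge> 0\<close> by (intro mult_left_mono power_mono) auto
    finally have "m * y ^ d / 2 \<le> x * y ^ (d - 1)"
      using False by simp
    moreover note small
    ultimately show ?thesis
      unfolding max_absorb2[OF less_imp_le[OF \<open>\<not> y \<le> x\<close>[unfolded not_le]]]
      by (meson max.coboundedI2 order_trans)
  qed
qed

lemma abs_ln_sub_power_le:
  fixes Z Q c C :: real
  assumes "Z > 0" "c > 0" "c * Z ^ d \<le> Q" "Q \<le> C * Z ^ d"
  shows "\<bar>ln Q - d * ln Z\<bar> \<le> max (ln C) (- ln c)"
proof -
  have "0 < c * Z ^ d"
    using assms by simp
  then have "Q > 0" "0 < C * Z ^ d"
    using assms by linarith+
  then have "C > 0"
    using \<open>Z > 0\<close> by (simp add: zero_less_mult_iff)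
  have "ln (c * Z ^ d) \<le> ln Q" "ln Q \<le> ln (C * Z ^ d)"
    using assms \<open>0 < c * Z ^ d\<close> \<open>Q > 0\<close> by simp_all
  moreover have "ln (c * Z ^ d) = ln c + d * ln Z" "ln (C * Z ^ d) = ln C + d * ln Z"
    using assms \<open>C > 0\<close> by (simp_all add: ln_mult ln_realpow)
  ultimately show ?thesis
    by linarith
qed

lemma telescoping_geometric_bound:
  fixes g :: "nat \<Rightarrow> real" and q C :: real
  assumes "q > 1" and step: "\<And>k. k \<ge> n0 \<Longrightarrow> \<bar>g (Suc k) - q * g k\<bar> \<le> C" and "n0 \<le> n"
  shows "\<bar>g n / q ^ n - g n0 / q ^ n0\<bar> \<le> C / (q ^ n0 * (q - 1))"
proof -
  define f where "f k = g k / q ^ k" for k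
  have f_step: "\<bar>f (Suc k) - f k\<bar> \<le> C / q ^ Suc k" if "k \<ge> n0" for k
  proof -
    have "f (Suc k) - f k = (g (Suc k) - q * g k) / q ^ Suc k"
      using \<open>q > 1\<close> by (simp add: f_def field_simps)
    then show ?thesis
      using step[OF that] \<open>q > 1\<close> by (simp add: divide_right_mono)
  qed
  have partial: "\<bar>f (n0 + j) - f n0\<bar> \<le> C * (1 / q ^ n0 - 1 / q ^ (n0 + j)) / (q - 1)" for j
  proof (induction j)
    case (Suc j)
    have "\<bar>f (n0 + Suc j) - f n0\<bar> \<le> \<bar>f (Suc (n0 + j)) - f (n0 + j)\<bar> + \<bar>f (n0 + j) - f n0\<bar>"
      by simp
    also have "\<dots> \<le> C / q ^ Suc (n0 + j) + C * (1 / q ^ n0 - 1 / q ^ (n0 + j)) / (q - 1)"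
      using f_step[of "n0 + j"] Suc.IH by simp
    also have "\<dots> = C * (1 / q ^ n0 - 1 / q ^ (n0 + Suc j)) / (q - 1)"
      using \<open>q > 1\<close> by (simp add: field_simps)
    finally show ?case .
  qed simp
  obtain j where n: "n = n0 + j"
    using \<open>n0 \<le> n\<close> le_Suc_ex by blast
  have "C \<ge> 0"
    using step[of n0] by linarith
  then have "C * (1 / q ^ n0 - 1 / q ^ (n0 + j)) / (q - 1) \<le> C * (1 / q ^ n0) / (q - 1)"
    using \<open>q > 1\<close> by (intro divide_right_mono mult_left_mono) auto
  then show ?thesis
    using partial[of j] by (simp add: n f_def)
qed

section \<open>Absolute values on algebraic numbers\<close>

locale alg_abs_value =
  fixes v :: "complex \<Rightarrow> real"
  assumes abs_value_alg: "abs_value_alg v"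
begin

lemma nonneg: "algebraic x \<Longrightarrow> v x \<ge> 0"
  and eq_0_iff: "algebraic x \<Longrightarrow> v x = 0 \<longleftrightarrow> x = 0"
  and mult: "algebraic x \<Longrightarrow> algebraic y \<Longrightarrow> v (x * y) = v x * v y"
  and triangle: "algebraic x \<Longrightarrow> algebraic y \<Longrightarrow> v (x + y) \<le> v x + v y"
  using abs_value_alg unfolding abs_value_alg_def by blast+

lemma one: "v 1 = 1"
  using mult[of 1 1] eq_0_iff[of 1] by simp

lemma minus: "algebraic x \<Longrightarrow> v (- x) = v x"
proof -
  have "v (- 1) * v (- 1) = 1" and "v (- 1) \<ge> 0"
    using mult[of "- 1" "- 1"] nonneg[of "- 1"] one by simp_all
  then have "v (- 1) = 1"
    by (metis abs_of_nonneg abs_square_eq_1 power2_eq_square)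
  then show "algebraic x \<Longrightarrow> v (- x) = v x"
    using mult[of "- 1" x] by simp
qed

lemma power: "algebraic x \<Longrightarrow> v (x ^ n) = v x ^ n"
  by (induction n) (simp_all add: one mult algebraic_power)

lemma reverse_triangle: "algebraic x \<Longrightarrow> algebraic y \<Longrightarrow> v x - v y \<le> v (x + y)"
  using triangle[of "x + y" "- y"] minus[of y] by (simp add: algebraic_add)

lemma ln_max_step_bound:
  assumes "algebraic a" "algebraic b" "a \<noteq> 0 \<or> b \<noteq> 0" "algebraic lam" "d \<ge> 1"
    and "0 < m" "m \<le> 1" "1 \<le> M" "m \<le> v lam" "v lam \<le> M"
  shows "\<bar>ln (max (v (a ^ d + lam * b ^ d)) (v (a * b ^ (d - 1)))) - d * ln (max (v a) (v b))\<bar>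
           \<le> ln (2 * M) - ln m"
proof -
  have alg: "algebraic (a ^ d)" "algebraic (lam * b ^ d)"
    using assms by (simp_all add: algebraic_power algebraic_mult)
  have v_ad: "v (a ^ d) = v a ^ d" and v_lbd: "v (lam * b ^ d) = v lam * v b ^ d"
    using assms by (simp_all add: power mult algebraic_power)
  have "v a \<ge> 0" "v b \<ge> 0"
    using assms nonneg by simp_all
  moreover have "v a \<noteq> 0 \<or> v b \<noteq> 0"
    using assms eq_0_iff by blast
  ultimately have max_pos: "max (v a) (v b) > 0"
    by linarith
  define p where "p = v (a ^ d + lam * b ^ d)"
  have "\<bar>v a ^ d - v lam * v b ^ d\<bar> \<le> p" "p \<le> v a ^ d + v lam * v b ^ d"
    using reverse_triangle[OF alg] reverse_triangle[OF alg(2,1)] triangle[OF alg]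
    unfolding p_def v_ad v_lbd by (auto simp: add.commute)
  moreover have "v (a * b ^ (d - 1)) = v a * v b ^ (d - 1)"
    using assms by (simp add: mult power algebraic_power)
  moreover have "0 \<le> v lam"
    using assms by linarith
  ultimately have "m / (2 * M) * max (v a) (v b) ^ d \<le> max p (v (a * b ^ (d - 1)))"
    and "max p (v (a * b ^ (d - 1))) \<le> 2 * M * max (v a) (v b) ^ d"
    using max_step_lower_bound[of d "v a" "v b" m M "v lam" p]
      max_step_upper_bound[of d "v a" "v b" M "v lam" p] assms \<open>v a \<ge> 0\<close> \<open>v b \<ge> 0\<close>
    by simp_all
  then have "\<bar>ln (max p (v (a * b ^ (d - 1)))) - d * ln (max (v a) (v b))\<bar>
      \<le> max (ln (2 * M)) (- ln (m / (2 * M)))"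
    using abs_ln_sub_power_le max_pos assms by simp
  moreover have "- ln (m / (2 * M)) = ln (2 * M) - ln m" "ln m \<le> 0"
    using assms by (simp_all add: ln_div)
  ultimately show ?thesis
    by (simp add: p_def)
qed

end

section \<open>The iteration at a point\<close>

lemma coprime_imp_no_common_root:
  assumes "coprime p q" "poly p x = 0" "poly q x = 0"
  shows False
proof -
  have "[:- x, 1:] dvd p" "[:- x, 1:] dvd q"
    using assms by (simp_all add: poly_eq_0_iff_dvd)
  with \<open>coprime p q\<close> have "is_unit [:- x, 1:]"
    using coprime_common_divisor by blast
  then show False
    by (simp add: is_unit_poly_iff)
qed

lemma poly_div_X:
  fixes p :: "'a::field poly"
  assumes "poly p 0 = 0" "x \<noteq> 0"
  shows "poly (p div [:0, 1:]) x = poly p x / x"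
proof -
  have "[:0, 1:] dvd p"
    using assms poly_eq_0_iff_dvd[of p 0] by simp
  then have "poly p x = poly (p div [:0, 1:] * [:0, 1:]) x"
    by (simp only: dvd_div_mult_self)
  also have "\<dots> = poly (p div [:0, 1:]) x * x"
    by simp
  finally show ?thesis
    using \<open>x \<noteq> 0\<close> by simp
qed

lemma step_pair_nonzero:
  fixes a b lam :: "'a::idom"
  assumes "d \<ge> 2" "lam \<noteq> 0" "a \<noteq> 0 \<or> b \<noteq> 0"
  shows "a ^ d + lam * b ^ d \<noteq> 0 \<or> a * b ^ (d - 1) \<noteq> 0"
  using assms by (cases "a = 0") (auto simp: power_0_left)

lemma poly_ABseq_Suc_Suc:
  "poly (fst (ABseq d A B (Suc (Suc n)))) x
     = poly (fst (ABseq d A B (Suc n))) x ^ d + x * poly (snd (ABseq d A B (Suc n))) x ^ d"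
  "poly (snd (ABseq d A B (Suc (Suc n)))) x
     = poly (fst (ABseq d A B (Suc n))) x * poly (snd (ABseq d A B (Suc n))) x ^ (d - 1)"
  by (simp_all add: case_prod_beta Let_def)

lemma poly_ABseq_1:
  assumes "d \<ge> 1" "x \<noteq> 0"
  obtains c where "c = 1 \<or> c = 1 / x"
    and "poly (fst (ABseq d A B 1)) x = c * (poly A x ^ d + x * poly B x ^ d)"
    and "poly (snd (ABseq d A B 1)) x = c * (poly A x * poly B x ^ (d - 1))"
proof -
  define P Q where "P = A ^ d + [:0, 1:] * B ^ d" and "Q = A * B ^ (d - 1)"
  have AB1: "ABseq d A B 1 = (if poly A 0 \<noteq> 0 then (P, Q) else (P div [:0, 1:], Q div [:0, 1:]))"
    unfolding P_def Q_def One_nat_def ABseq.simps(2) ..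
  have PQ: "poly P x = poly A x ^ d + x * poly B x ^ d" "poly Q x = poly A x * poly B x ^ (d - 1)"
    by (simp_all add: P_def Q_def)
  show ?thesis
  proof (cases "poly A 0 = 0")
    case True
    then have "poly P 0 = 0" "poly Q 0 = 0"
      using \<open>d \<ge> 1\<close> by (simp_all add: P_def Q_def zero_power)
    with True that[of "1 / x"] show ?thesis
      unfolding AB1 using \<open>x \<noteq> 0\<close> by (simp add: poly_div_X PQ)
  next
    case False
    with that[of 1] show ?thesis
      unfolding AB1 by (simp add: PQ)
  qed
qed

lemma poly_ABseq_nonvanishing:
  assumes "d \<ge> 2" "alg_poly A" "alg_poly B" "coprime A B" "algebraic lam" "lam \<noteq> 0" "k \<ge> 1"
  shows "algebraic (poly (fst (ABseq d A B k)) lam) \<and> algebraic (poly (snd (ABseq d A B k)) lam)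
    \<and> (poly (fst (ABseq d A B k)) lam \<noteq> 0 \<or> poly (snd (ABseq d A B k)) lam \<noteq> 0)"
  using \<open>k \<ge> 1\<close>
proof (induction k rule: dec_induct)
  case base
  let ?a = "poly A lam" and ?b = "poly B lam"
  obtain c where c: "c = 1 \<or> c = 1 / lam"
    and a1: "poly (fst (ABseq d A B 1)) lam = c * (?a ^ d + lam * ?b ^ d)"
    and b1: "poly (snd (ABseq d A B 1)) lam = c * (?a * ?b ^ (d - 1))"
    using poly_ABseq_1[of d lam A B] assms by auto
  have "algebraic c" "c \<noteq> 0"
    using c assms by (auto simp: divide_inverse)
  moreover have "algebraic ?a" "algebraic ?b" "?a \<noteq> 0 \<or> ?b \<noteq> 0"
    using assms algebraic_poly coprime_imp_no_common_root by blast+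
  ultimately show ?case
    unfolding a1 b1 using step_pair_nonzero[of d lam ?a ?b] assms
    by (simp add: algebraic_add algebraic_mult algebraic_power)
next
  case (step k)
  then obtain j where k: "k = Suc j"
    by (cases k) auto
  let ?a = "poly (fst (ABseq d A B (Suc j))) lam" and ?b = "poly (snd (ABseq d A B (Suc j))) lam"
  have "?a ^ d + lam * ?b ^ d \<noteq> 0 \<or> ?a * ?b ^ (d - 1) \<noteq> 0"
    using step_pair_nonzero[of d lam ?a ?b] step.IH assms unfolding k by blast
  moreover have "algebraic (?a ^ d + lam * ?b ^ d)" "algebraic (?a * ?b ^ (d - 1))"
    using step.IH \<open>algebraic lam\<close> unfolding k
    by (simp_all add: algebraic_add algebraic_mult algebraic_power)
  ultimately show ?case
    unfolding k poly_ABseq_Suc_Suc by blast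
qed

theorem proposition5p2:
  fixes d :: nat and A B :: "complex poly" and lam :: complex and v :: "complex \<Rightarrow> real"
    and m M :: real and n0 n :: nat
  assumes "d \<ge> 2"
    and "alg_poly A" and "alg_poly B" and "A \<noteq> 0" and "B \<noteq> 0" and "coprime A B"
    and "algebraic lam" and "lam \<noteq> 0"
    and "abs_value_alg v"
    and "0 < m" and "m \<le> 1" and "1 \<le> M"
    and "m \<le> v lam" and "v lam \<le> M"
    and "1 \<le> n0" and "n0 \<le> n"
  shows "\<bar>ln (Mnv v d A B n lam) / real d ^ n - ln (Mnv v d A B n0 lam) / real d ^ n0\<bar>
           \<le> (ln (2 * M) - ln m) / (real d ^ n0 * (real d - 1))"
proof -
  interpret alg_abs_value v
    by (rule alg_abs_value.intro) fact
  have step: "\<bar>ln (Mnv v d A B (Suc k) lam) - d * ln (Mnv v d A B k lam)\<bar> \<le> ln (2 * M) - ln m"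
    if "k \<ge> n0" for k
  proof -
    obtain j where k: "k = Suc j"
      using \<open>k \<ge> n0\<close> \<open>1 \<le> n0\<close> by (cases k) auto
    let ?a = "poly (fst (ABseq d A B (Suc j))) lam" and ?b = "poly (snd (ABseq d A B (Suc j))) lam"
    have "algebraic ?a" "algebraic ?b" "?a \<noteq> 0 \<or> ?b \<noteq> 0"
      using poly_ABseq_nonvanishing[of d A B lam "Suc j"] assms by simp_all
    then show ?thesis
      using ln_max_step_bound[of ?a ?b lam d m M] assms
      unfolding k Mnv_def poly_ABseq_Suc_Suc by simp
  qed
  have "real d > 1"
    using \<open>d \<ge> 2\<close> by simp
  from telescoping_geometric_bound[where g = "\<lambda>k. ln (Mnv v d A B k lam)", OF this step \<open>n0 \<le> n\<close>]
  show ?thesis .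
qed

end
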